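(* Let $n\ge3$. (1) For any $\mathbf{p}\in\mathbb{Q}^{n!}$, there exists $\widehat{\mathbf{p}}\in\mathbb{N}_0^{n!}$ such that for every $\mathbf{w}\in\overline{W}$, the vectors $Q_{\widehat{\mathbf{p}}}\mathbf{w}$ and $Q_{\mathbf{p}}\mathbf{w}$ lie in the same face. (2) For any $\mathbf{p}\in\mathbb{Q}^{n!}$, there exists $\widetilde{\mathbf{p}}\in\mathbb{Q}^{n!}$ with $\widetilde{p}_\ell\ge 0$ for all $\ell$ and $\sum_{\ell=1}^{n!}\widetilde{p}_\ell=1$ such that for every $\mathbf{w}\in\overline{W}$, the vectors $Q_{\widetilde{\mathbf{p}}}\mathbf{w}$ and $Q_{\mathbf{p}}\mathbf{w}$ lie in the same face.
   Context: Work over $\mathbb{Q}$; $\mathbb{N}_0$ denotes the nonnegative integers. Let $\overline{W}=\{\mathbf{x}\in\mathbb{Q}^n : x_1\ge x_2\ge\cdots\ge x_n,\ x_1+\cdots+x_n=0\}$. Label the permutations of $S_n$ as $\sigma_1,\dots,\sigma_{n!}$ (lexicographically in one-line notation), let $R_\ell$ be the $n\times n$ permutation matrix with $R_\ell(i,j)=1$ iff $\sigma_\ell(j)=i$, and for $\mathbf{p}\in\mathbb{Q}^{n!}$ let $Q_{\mathbf{p}}=\sum_{\ell=1}^{n!}p_\ell R_\ell$. Two vectors $\mathbf{x},\mathbf{y}\in\mathbb{Q}^n$ lie in the same face (of the braid arrangement) iff for all $i,j\in\{1,\dots,n\}$ we have $x_i>x_j\iff y_i>y_j$ and $x_i=x_j\iff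 y_i=y_j$, i.e. they induce the same (possibly non-strict) ranking of the coordinates. *)

theory Defs
  imports Complex_Main "HOL-Combinatorics.Permutations"
begin

text \<open>Vectors in Q^n are functions nat => rat, only indices 0..n-1 matter.
  Indices are 0-based. The permutations of S_n are the permutations of {0..<n}.\<close>

definition perms :: "nat \<Rightarrow> (nat \<Rightarrow> nat) set" where
  "perms n = {\<sigma>. \<sigma> permutes {..<n}}"

definition permmat :: "(nat \<Rightarrow> nat) \<Rightarrow> nat \<Rightarrow> nat \<Rightarrow> rat" where
  "permmat \<sigma> i j = (if \<sigma> j = i then 1 else 0)"

definition Qmat :: "nat \<Rightarrow> ((nat \<Rightarrow> nat) \<Rightarrow> rat) \<Rightarrow> nat \<Rightarrow> nat \<Rightarrow> rat" where
  "Qmat n p i j = (\<Sum>\<sigma>\<in>perms n. p \<sigma> * permmat \<sigma> i j)"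

definition mat_vec :: "nat \<Rightarrow> (nat \<Rightarrow> nat \<Rightarrow> rat) \<Rightarrow> (nat \<Rightarrow> rat) \<Rightarrow> nat \<Rightarrow> rat" where
  "mat_vec n M w i = (\<Sum>j<n. M i j * w j)"

definition Wbar :: "nat \<Rightarrow> (nat \<Rightarrow> rat) set" where
  "Wbar n = {w. (\<forall>i j. i \<le> j \<longrightarrow> j < n \<longrightarrow> w j \<le> w i) \<and> (\<Sum>i<n. w i) = 0}"

definition same_face :: "nat \<Rightarrow> (nat \<Rightarrow> rat) \<Rightarrow> (nat \<Rightarrow> rat) \<Rightarrow> bool" where
  "same_face n x y = (\<forall>i<n. \<forall>j<n. (x i > x j \<longleftrightarrow> y i > y j) \<and> (x i = x j \<longleftrightarrow> y i = y j))"

end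

theory Submission
  imports Defs
begin

text \<open>
  Every column of a permutation matrix sums to 1, so the entries of \<open>Q\<^sub>p w\<close> sum to
  \<open>(\<Sum>\<^sub>\<sigma> p\<^sub>\<sigma>)(\<Sum>\<^sub>j w\<^sub>j)\<close>; and the rows of \<open>\<Sum>\<^sub>\<sigma> R\<^sub>\<sigma>\<close> are all equal, since left
  multiplication by a transposition permutes \<open>S\<^sub>n\<close>. Hence \<open>(\<Sum>\<^sub>\<sigma> R\<^sub>\<sigma>) w = 0\<close> whenever the
  entries of \<open>w\<close> sum to 0, and so \<open>Q\<^bsub>a p + b\<^esub> w = a Q\<^sub>p w\<close> for all \<open>w \<in> W\<close>. For \<open>a > 0\<close>
  both vectors lie in the same face. It remains to choose \<open>a > 0\<close> and \<open>b\<close> making the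
  weights \<open>a p\<^sub>\<sigma> + b\<close> nonnegative integers (clear denominators, then shift) or a
  probability vector (shift, then normalise).
\<close>

lemma finite_perms: "finite (perms n)"
  unfolding perms_def by (rule finite_permutations) simp

lemma perms_nonempty: "perms n \<noteq> {}"
  unfolding perms_def using permutes_id by blast

lemma Qmat_cong:
  assumes "\<And>\<sigma>. \<sigma> \<in> perms n \<Longrightarrow> p \<sigma> = q \<sigma>"
  shows "Qmat n p = Qmat n q"
  unfolding Qmat_def using assms by (intro ext sum.cong) auto

lemma sum_permmat_column:
  assumes "\<sigma> \<in> perms n" "j < n"
  shows "(\<Sum>i<n. permmat \<sigma> i j) = 1"
proof -
  have "\<sigma> j < n"
    using assms permutes_in_image[of \<sigma> "{..<n}" j] by (auto simp: perms_def)
  then show ?thesis by (simp add: permmat_def)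
qed

lemma sum_mat_vec_Qmat:
  "(\<Sum>i<n. mat_vec n (Qmat n p) w i) = (\<Sum>\<sigma>\<in>perms n. p \<sigma>) * (\<Sum>j<n. w j)"
proof -
  have "(\<Sum>i<n. mat_vec n (Qmat n p) w i)
      = (\<Sum>i<n. \<Sum>j<n. \<Sum>\<sigma>\<in>perms n. p \<sigma> * w j * permmat \<sigma> i j)"
    unfolding mat_vec_def Qmat_def by (simp add: sum_distrib_left sum_distrib_right mult_ac)
  also have "\<dots> = (\<Sum>j<n. \<Sum>\<sigma>\<in>perms n. \<Sum>i<n. p \<sigma> * w j * permmat \<sigma> i j)"
    by (rule trans[OF sum.swap], intro sum.cong refl, rule sum.swap)
  also have "\<dots> = (\<Sum>j<n. \<Sum>\<sigma>\<in>perms n. p \<sigma> * w j)"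
    by (intro sum.cong refl) (simp add: sum_distrib_left[symmetric] sum_permmat_column)
  also have "\<dots> = (\<Sum>\<sigma>\<in>perms n. p \<sigma>) * (\<Sum>j<n. w j)"
    unfolding sum_product by (rule sum.swap)
  finally show ?thesis .
qed

lemma Qmat_const_row_eq:
  assumes "i < n" "k < n"
  shows "Qmat n (\<lambda>_. c) k j = Qmat n (\<lambda>_. c) i j"
proof -
  define \<tau> where "\<tau> = Transposition.transpose i k"
  have "\<tau> permutes {..<n}"
    unfolding \<tau>_def using assms by (intro permutes_swap_id) auto
  then have "bij_betw ((\<circ>) \<tau>) (perms n) (perms n)"
    by (intro bij_betw_byWitness[where f' = "(\<circ>) \<tau>"])
      (auto simp: perms_def permutes_compose \<tau>_def comp_assoc[symmetric])
  then have "Qmat n (\<lambda>_. c) k j = (\<Sum>\<sigma>\<in>perms n. c * permmat (\<tau> \<circ> \<sigma>) k j)"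
    unfolding Qmat_def by (rule sum.reindex_bij_betw[symmetric])
  also have "\<dots> = Qmat n (\<lambda>_. c) i j"
    unfolding Qmat_def permmat_def \<tau>_def
    by (intro sum.cong refl) (auto simp: transpose_eq_iff)
  finally show ?thesis .
qed

lemma mat_vec_Qmat_const_eq_0:
  assumes "(\<Sum>j<n. w j) = 0" "i < n"
  shows "mat_vec n (Qmat n (\<lambda>_. c)) w i = 0"
proof -
  let ?v = "mat_vec n (Qmat n (\<lambda>_. c)) w"
  have "?v k = ?v i" if "k < n" for k
    unfolding mat_vec_def by (simp add: Qmat_const_row_eq[OF assms(2) that])
  then have "of_nat n * ?v i = (\<Sum>k<n. ?v k)"
    by simp
  also have "\<dots> = 0"
    using assms(1) by (simp add: sum_mat_vec_Qmat)
  finally show ?thesis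
    using assms(2) by simp
qed

lemma Qmat_affine: "Qmat n (\<lambda>\<sigma>. a * p \<sigma> + b) i j = a * Qmat n p i j + Qmat n (\<lambda>_. b) i j"
  unfolding Qmat_def by (simp add: distrib_right sum.distrib sum_distrib_left mult.assoc)

lemma mat_vec_Qmat_affine:
  "mat_vec n (Qmat n (\<lambda>\<sigma>. a * p \<sigma> + b)) w i
     = a * mat_vec n (Qmat n p) w i + mat_vec n (Qmat n (\<lambda>_. b)) w i"
  unfolding mat_vec_def Qmat_affine by (simp add: distrib_right sum.distrib sum_distrib_left mult.assoc)

lemma Wbar_sum_eq_0: "w \<in> Wbar n \<Longrightarrow> (\<Sum>j<n. w j) = 0"
  by (simp add: Wbar_def)

lemma same_face_pos_scale:
  assumes "a > 0" "\<And>i. i < n \<Longrightarrow> x i = a * y i"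
  shows "same_face n x y"
  unfolding same_face_def using assms by auto

lemma same_face_Qmat_affine:
  assumes "a > 0" "(\<Sum>j<n. w j) = 0"
  shows "same_face n (mat_vec n (Qmat n (\<lambda>\<sigma>. a * p \<sigma> + b)) w) (mat_vec n (Qmat n p) w)"
  using assms by (intro same_face_pos_scale[of a])
    (simp_all add: mat_vec_Qmat_affine mat_vec_Qmat_const_eq_0)

lemma ex_common_denominator:
  fixes S :: "rat set"
  assumes "finite S"
  shows "\<exists>D::int. D > 0 \<and> (\<forall>x\<in>S. of_int D * x \<in> \<int>)"
  using assms
proof (induction S rule: finite_induct)
  case empty
  show ?case by (intro exI[of _ 1]) auto
next
  case (insert x S)
  then obtain D where D: "D > 0" "\<forall>y\<in>S. of_int D * y \<in> \<int>" by auto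
  obtain a d where q: "quotient_of x = (a, d)" by (cases "quotient_of x")
  have d: "d > 0" "x = of_int a / of_int d"
    using quotient_of_denom_pos[OF q] quotient_of_div[OF q] by auto
  have "of_int (D * d) * x = of_int (D * a)"
    using d by simp
  moreover have "of_int (D * d) * y = of_int d * (of_int D * y)" for y :: rat
    by simp
  ultimately have "\<forall>y\<in>insert x S. of_int (D * d) * y \<in> \<int>"
    using D(2) by (metis Ints_mult Ints_of_int insert_iff)
  then show ?case
    using D(1) d(1) by (intro exI[of _ "D * d"]) simp
qed

lemma ex_affine_to_nat:
  fixes p :: "'a \<Rightarrow> rat"
  assumes "finite A"
  shows "\<exists>a>0. \<exists>b. \<exists>h :: 'a \<Rightarrow> nat. \<forall>x\<in>A. of_nat (h x) = a * p x + b"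
proof -
  obtain D :: int where D: "D > 0" "\<forall>x\<in>A. of_int D * p x \<in> \<int>"
    using ex_common_denominator[of "p ` A"] assms by auto
  define M where "M = (\<Sum>x\<in>A. \<bar>\<lfloor>of_int D * p x\<rfloor>\<bar>)"
  have "of_nat (nat (\<lfloor>of_int D * p x\<rfloor> + M)) = of_int D * p x + of_int M" if x: "x \<in> A" for x
  proof -
    obtain z where z: "of_int D * p x = of_int z"
      using D(2) x by (auto elim: Ints_cases)
    have "\<bar>z\<bar> \<le> M"
      unfolding M_def using assms x z
      by (metis (no_types, lifting) abs_ge_zero floor_of_int member_le_sum)
    then show ?thesis by (simp add: z)
  qed
  then show ?thesis
    using D(1) by (intro exI[of _ "of_int D"] conjI exI) auto
qed

lemma ex_affine_to_distribution:
  fixes p :: "'a \<Rightarrow> rat"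
  assumes "finite A" "A \<noteq> {}"
  shows "\<exists>a>0. \<exists>b. (\<forall>x\<in>A. a * p x + b \<ge> 0) \<and> (\<Sum>x\<in>A. a * p x + b) = 1"
proof -
  define c where "c = 1 + (\<Sum>x\<in>A. \<bar>p x\<bar>)"
  define S where "S = (\<Sum>x\<in>A. p x + c)"
  have ge1: "p x + c \<ge> 1" if "x \<in> A" for x
    using member_le_sum[of x A "\<lambda>x. \<bar>p x\<bar>"] assms(1) that unfolding c_def by auto
  have "S \<ge> of_nat (card A)"
    unfolding S_def using sum_mono[of A "\<lambda>_. 1" "\<lambda>x. p x + c"] ge1 by simp
  moreover have "card A > 0"
    using assms by (simp add: card_gt_0_iff)
  ultimately have "S > 0" by linarith
  define a b where "a = 1 / S" and "b = c / S"
  have affine_eq: "a * p x + b = (p x + c) / S" for x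
    unfolding a_def b_def by (simp add: add_divide_distrib)
  have "\<forall>x\<in>A. a * p x + b \<ge> 0"
    using ge1 \<open>S > 0\<close> by (simp add: affine_eq order_trans[OF zero_le_one])
  moreover have "(\<Sum>x\<in>A. a * p x + b) = 1"
    unfolding affine_eq sum_divide_distrib[symmetric] S_def[symmetric] using \<open>S > 0\<close> by simp
  moreover have "a > 0"
    unfolding a_def using \<open>S > 0\<close> by simp
  ultimately show ?thesis by blast
qed

theorem proposition3p8:
  fixes n :: nat
  assumes "n \<ge> 3"
  shows "(\<forall>p :: (nat \<Rightarrow> nat) \<Rightarrow> rat. \<exists>ph :: (nat \<Rightarrow> nat) \<Rightarrow> nat.
            \<forall>w\<in>Wbar n. same_face n (mat_vec n (Qmat n (\<lambda>\<sigma>. of_nat (ph \<sigma>))) w)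
                                     (mat_vec n (Qmat n p) w))
       \<and> (\<forall>p :: (nat \<Rightarrow> nat) \<Rightarrow> rat. \<exists>pt :: (nat \<Rightarrow> nat) \<Rightarrow> rat.
            (\<forall>\<sigma>\<in>perms n. pt \<sigma> \<ge> 0) \<and> (\<Sum>\<sigma>\<in>perms n. pt \<sigma>) = 1 \<and>
            (\<forall>w\<in>Wbar n. same_face n (mat_vec n (Qmat n pt) w) (mat_vec n (Qmat n p) w)))"
proof (intro conjI allI)
  fix p :: "(nat \<Rightarrow> nat) \<Rightarrow> rat"
  obtain a b and h :: "(nat \<Rightarrow> nat) \<Rightarrow> nat"
    where a: "a > 0" and h: "\<forall>\<sigma>\<in>perms n. of_nat (h \<sigma>) = a * p \<sigma> + b"
    using ex_affine_to_nat[OF finite_perms] by blast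
  have "Qmat n (\<lambda>\<sigma>. of_nat (h \<sigma>)) = Qmat n (\<lambda>\<sigma>. a * p \<sigma> + b)"
    using h by (intro Qmat_cong) simp
  then show "\<exists>ph :: (nat \<Rightarrow> nat) \<Rightarrow> nat. \<forall>w\<in>Wbar n.
      same_face n (mat_vec n (Qmat n (\<lambda>\<sigma>. of_nat (ph \<sigma>))) w) (mat_vec n (Qmat n p) w)"
    using same_face_Qmat_affine[OF a] Wbar_sum_eq_0 by (intro exI[of _ h]) simp
next
  fix p :: "(nat \<Rightarrow> nat) \<Rightarrow> rat"
  obtain a b where a: "a > 0"
    and "\<forall>\<sigma>\<in>perms n. a * p \<sigma> + b \<ge> 0" "(\<Sum>\<sigma>\<in>perms n. a * p \<sigma> + b) = 1"
    using ex_affine_to_distribution[OF finite_perms perms_nonempty] by blast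
  then show "\<exists>pt. (\<forall>\<sigma>\<in>perms n. pt \<sigma> \<ge> 0) \<and> (\<Sum>\<sigma>\<in>perms n. pt \<sigma>) = 1 \<and>
      (\<forall>w\<in>Wbar n. same_face n (mat_vec n (Qmat n pt) w) (mat_vec n (Qmat n p) w))"
    using same_face_Qmat_affine[OF a] Wbar_sum_eq_0 by (intro exI[of _ "\<lambda>\<sigma>. a * p \<sigma> + b"]) simp
qed

end
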